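(* Let $\mathbb{F}\in\{\mathbb{R},\mathbb{C}\}$, let $\Phi=\{\varphi_i\}_{i=1}^M$ be a Parseval frame for $\mathbb{F}^N$, and let $1\le k\leq N$. Then $${N\choose k}\leq V_k(\Phi)\leq\sqrt{{M\choose k}{N\choose k}},$$ with equality in the upper bound if and only if $v_k(\Phi_K)=c_{M,N,k}$ for every $K\subseteq[M]$ with $|K|=k$, where $c_{M,N,k}=\sqrt{{M\choose k}^{-1}{N\choose k}}$; and with equality in the lower bound if and only if there is a subset $J\subseteq[M]$ with $|J|=N$ such that $\{\varphi_i\}_{i\in J}$ is an orthonormal basis of $\mathbb{F}^N$ and $\varphi_i=0$ whenever $i\notin J$.
   Context: A Parseval frame for $\mathbb{F}^N$ is a family $\{\varphi_i\}_{i=1}^M\subseteq\mathbb{F}^N$ whose $N\times M$ matrix $\Phi$ (columns $\varphi_i$) satisfies $\Phi\Phi^*=I$. For $K\subseteq[M]$, $\Phi_K$ denotes the $N\times|K|$ submatrix of columns indexed by $K$. For an $N\times k$ matrix $F$ with $k\le N$, $v_k(F)=\sqrt{\det(F^*F)}$. The total $k$-dimensional volume is $V_k(\Phi)=\sum_{|K|=k}v_k(\Phi_K)$. *)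

theory Defs
  imports Complex_Main "Jordan_Normal_Form.Schur_Decomposition" "Jordan_Normal_Form.DL_Submatrix"
begin

text \<open>Scalars: complex numbers; the field F is modelled as a subset of the complex numbers,
  either the reals or all of the complex numbers.  Indices of [M] are 0..<M.\<close>

definition in_field_vec :: "complex set \<Rightarrow> nat \<Rightarrow> complex vec \<Rightarrow> bool" where
  "in_field_vec F N v \<longleftrightarrow> v \<in> carrier_vec N \<and> (\<forall>l<N. v $ l \<in> F)"

definition parseval_frame :: "complex set \<Rightarrow> nat \<Rightarrow> nat \<Rightarrow> complex mat \<Rightarrow> bool" where
  "parseval_frame F N M Phi \<longleftrightarrow> Phi \<in> carrier_mat N M \<and>
     (\<forall>i<M. in_field_vec F N (col Phi i)) \<and> Phi * mat_adjoint Phi = 1\<^sub>m N"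

definition col_sub :: "complex mat \<Rightarrow> nat set \<Rightarrow> complex mat" where
  "col_sub Phi K = submatrix Phi {0..<dim_row Phi} K"

text \<open>v_k(F) = sqrt(det(F^* F)); det(F^* F) is a nonnegative real number, so we take the
  square root of its modulus (which equals det(F^* F) itself).\<close>
definition vol :: "complex mat \<Rightarrow> real" where
  "vol A = sqrt (cmod (det (mat_adjoint A * A)))"

definition total_vol :: "nat \<Rightarrow> nat \<Rightarrow> complex mat \<Rightarrow> real" where
  "total_vol M k Phi = (\<Sum>K\<in>{K. K \<subseteq> {0..<M} \<and> card K = k}. vol (col_sub Phi K))"

definition cinner :: "complex vec \<Rightarrow> complex vec \<Rightarrow> complex" where
  "cinner v w = (\<Sum>l<dim_vec v. v $ l * cnj (w $ l))"

definition is_onb :: "complex set \<Rightarrow> nat \<Rightarrow> complex mat \<Rightarrow> nat set \<Rightarrow> bool" where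
  "is_onb F N Phi J \<longleftrightarrow>
     (\<forall>i\<in>J. \<forall>j\<in>J. cinner (col Phi i) (col Phi j) = (if i = j then 1 else 0)) \<and>
     (\<forall>v. in_field_vec F N v \<longrightarrow>
        (\<exists>c. (\<forall>i\<in>J. c i \<in> F) \<and> v = finsum_vec TYPE(complex) N (\<lambda>i. c i \<cdot>\<^sub>v col Phi i) J))"

end

theory Submission
  imports Defs
begin

text \<open>
  Write \<open>r\<^sub>K = v\<^sub>k(\<Phi>\<^sub>K)\<^sup>2 = det (\<Phi>\<^sub>K\<^sup>* \<Phi>\<^sub>K)\<close>.  By Cauchy--Binet, \<open>\<Sum>\<^sub>K r\<^sub>K\<close> is the sum of
  the squared \<open>k \<times> k\<close> minors of \<open>\<Phi>\<close>, which is \<open>N choose k\<close> because the rows of \<open>\<Phi>\<close> are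
  orthonormal.  Stacking \<open>\<Phi>\<close> on top of \<open>1 - \<Phi>\<^sup>* \<Phi>\<close> gives a matrix with orthonormal columns
  whose minors include those of \<open>\<Phi>\<close>, so \<open>r\<^sub>K \<le> 1\<close>.  Hence \<open>V\<^sub>k = \<Sum>\<^sub>K \<surd>r\<^sub>K \<ge> \<Sum>\<^sub>K r\<^sub>K\<close>, with
  equality iff every \<open>r\<^sub>K\<close> is \<open>0\<close> or \<open>1\<close>, and Cauchy--Schwarz gives the upper bound, with
  equality iff all \<open>r\<^sub>K\<close> are equal.  If all \<open>r\<^sub>K \<in> {0, 1}\<close>, the \<open>N choose k\<close> sets with
  \<open>r\<^sub>K = 1\<close> consist of unit columns, which forces \<open>N\<close> unit columns; since \<open>\<Phi>\<^sup>* \<Phi>\<close> is a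
  projection of trace \<open>N\<close>, these are orthonormal and all other columns vanish.
\<close>

section \<open>Minors and the Cauchy--Binet formula\<close>

lemma mat_adjoint_dim [simp]:
  "dim_row (mat_adjoint A) = dim_col A" "dim_col (mat_adjoint A) = dim_row A"
  unfolding mat_adjoint_def by auto

lemma mat_adjoint_index [simp]:
  "i < dim_col A \<Longrightarrow> j < dim_row A \<Longrightarrow> mat_adjoint A $$ (i,j) = cnj (A $$ (j,i))"
  unfolding mat_adjoint_def by (simp add: mat_of_rows_index)

lemma mat_adjoint_mat_adjoint [simp]:
  fixes A :: "complex mat"
  shows "mat_adjoint (mat_adjoint A) = A"
  by (intro eq_matI) auto

lemma det_mat_adjoint:
  fixes A :: "complex mat"
  assumes A: "A \<in> carrier_mat n n"
  shows "det (mat_adjoint A) = cnj (det A)"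
proof -
  have "det (mat_adjoint A) =
      (\<Sum>p\<in>{p. p permutes {0..<n}}. signof p * (\<Prod>i=0..<n. cnj (A $$ (p i, i))))"
    using A by (subst det_def'[of _ n]) (auto simp: permutes_in_image intro!: sum.cong prod.cong)
  also have "\<dots> = cnj (det (transpose_mat A))"
    using A by (subst det_def'[of _ n])
      (auto simp: permutes_in_image intro!: sum.cong prod.cong)
  finally show ?thesis using det_transpose[OF A] by simp
qed

lemma replace_col_det_zero_imp_zero:
  fixes A :: "'a :: field mat"
  assumes A: "A \<in> carrier_mat n n" and "det A \<noteq> 0" and v: "v \<in> carrier_vec n"
    and zero: "\<And>a. a < n \<Longrightarrow> det (replace_col A v a) = 0"
  shows "v = 0\<^sub>v n"
proof -
  define x where "x = inverse (det A) \<cdot>\<^sub>v (adj_mat A *\<^sub>v v)"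
  have x: "x \<in> carrier_vec n" using adj_mat(1)[OF A] v by (simp add: x_def)
  have "A *\<^sub>v x = inverse (det A) \<cdot>\<^sub>v ((A * adj_mat A) *\<^sub>v v)"
    using adj_mat(1)[OF A] v by (simp add: x_def mult_mat_vec[OF A] assoc_mult_mat_vec[OF A _ v])
  also have "(A * adj_mat A) *\<^sub>v v = det A \<cdot>\<^sub>v v"
    using adj_mat(2)[OF A] v by auto
  also have "inverse (det A) \<cdot>\<^sub>v (det A \<cdot>\<^sub>v v) = v"
    using \<open>det A \<noteq> 0\<close> by (simp add: smult_smult_assoc)
  finally have Ax: "A *\<^sub>v x = v" .
  have "x $ a = 0" if "a < n" for a
    using cramer_lemma_mat[OF A x that] zero[OF that] \<open>det A \<noteq> 0\<close> by (simp add: Ax)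
  then have "x = 0\<^sub>v n" using x by (intro eq_vecI) auto
  then show ?thesis using Ax A by auto
qed

text \<open>The normalisation to the identity outside \<open>{0..<k}\<close> matches the index set of
  \<open>det_linear_rows_sum\<close> and is preserved by composing with permutations of \<open>{0..<k}\<close>.\<close>
definition index_maps :: "nat \<Rightarrow> nat \<Rightarrow> (nat \<Rightarrow> nat) set" where
  "index_maps k n = {f. (\<forall>i\<in>{0..<k}. f i \<in> {0..<n}) \<and> (\<forall>i. i \<notin> {0..<k} \<longrightarrow> f i = i)}"

lemma finite_index_maps: "finite (index_maps k n)"
  unfolding index_maps_def by (rule finite_bounded_functions) auto

lemma index_maps_mono: "n \<le> n' \<Longrightarrow> index_maps k n \<subseteq> index_maps k n'"
  unfolding index_maps_def by auto

lemma comp_permutes_in_index_maps: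
  assumes "f \<in> index_maps k n" "p permutes {0..<k}"
  shows "f \<circ> p \<in> index_maps k n"
  using assms permutes_in_image[OF assms(2)] permutes_not_in[OF assms(2)]
  unfolding index_maps_def by auto

lemma sum_index_maps_comp_permutes:
  assumes p: "p permutes {0..<k}"
  shows "(\<Sum>f\<in>index_maps k n. h (f \<circ> p)) = (\<Sum>f\<in>index_maps k n. h f)"
proof (rule sum.reindex_bij_witness[where i="\<lambda>f. f \<circ> Hilbert_Choice.inv p" and j="\<lambda>f. f \<circ> p"])
  fix f assume f: "f \<in> index_maps k n"
  show "f \<circ> p \<circ> Hilbert_Choice.inv p = f" "f \<circ> Hilbert_Choice.inv p \<circ> p = f"
    by (simp_all add: comp_assoc permutes_inv_o[OF p])
  show "f \<circ> p \<in> index_maps k n" "f \<circ> Hilbert_Choice.inv p \<in> index_maps k n"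
    using comp_permutes_in_index_maps[OF f] p permutes_inv[OF p] by auto
qed simp

definition minor :: "nat \<Rightarrow> 'a mat \<Rightarrow> (nat \<Rightarrow> nat) \<Rightarrow> (nat \<Rightarrow> nat) \<Rightarrow> 'a mat" where
  "minor k A f g = mat k k (\<lambda>(a,b). A $$ (f a, g b))"

lemma minor_carrier [simp]: "minor k A f g \<in> carrier_mat k k"
  by (simp add: minor_def)

lemma det_minor_permute_rows:
  assumes p: "p permutes {0..<k}"
  shows "det (minor k A (f \<circ> p) g) = signof p * det (minor k A f g)"
proof -
  have "minor k A (f \<circ> p) g = mat k k (\<lambda>(a,b). minor k A f g $$ (p a, b))"
    using permutes_in_image[OF p] by (intro eq_matI) (auto simp: minor_def)
  then show ?thesis using det_permute_rows[OF minor_carrier p] by simp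
qed

lemma det_minor_permute_cols:
  assumes p: "p permutes {0..<k}"
  shows "det (minor k A f (g \<circ> p)) = signof p * det (minor k A f g)"
proof -
  have "det (minor k A f (g \<circ> p)) = det (transpose_mat (minor k A f (g \<circ> p)))"
    by (simp add: det_transpose[OF minor_carrier])
  also have "transpose_mat (minor k A f (g \<circ> p))
      = mat k k (\<lambda>(a,b). transpose_mat (minor k A f g) $$ (p a, b))"
    using permutes_in_image[OF p] by (intro eq_matI) (auto simp: minor_def)
  also have "det \<dots> = signof p * det (transpose_mat (minor k A f g))"
    by (rule det_permute_rows[OF _ p]) simp
  finally show ?thesis by (simp add: det_transpose[OF minor_carrier] comp_def)
qed

lemma det_minor_not_inj_cols:
  assumes "\<not> inj_on g {0..<k}"
  shows "det (minor k A f g) = 0"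
proof -
  obtain i j where "i < k" "j < k" "g i = g j" "i \<noteq> j"
    using assms unfolding inj_on_def by auto
  then show ?thesis
    by (intro det_identical_columns[of _ k i j]) (auto simp: minor_def intro!: eq_vecI)
qed

lemma det_minor_as_sum:
  "det (minor k A f g) = (\<Sum>p\<in>{p. p permutes {0..<k}}. signof p * (\<Prod>a=0..<k. A $$ (f (p a), g a)))"
proof -
  have "det (minor k A f g) = det (transpose_mat (minor k A f g))"
    by (simp add: det_transpose[OF minor_carrier])
  also have "\<dots> = (\<Sum>p\<in>{p. p permutes {0..<k}}. signof p * (\<Prod>a=0..<k. A $$ (f (p a), g a)))"
    by (subst det_def'[of _ k]) (auto simp: minor_def permutes_in_image intro!: sum.cong prod.cong)
  finally show ?thesis .
qed

lemma minor_mat_adjoint: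
  fixes A :: "complex mat"
  assumes "\<forall>a<k. f a < dim_row A" "\<forall>a<k. g a < dim_col A"
  shows "minor k (mat_adjoint A) g f = mat_adjoint (minor k A f g)"
  using assms by (intro eq_matI) (auto simp: minor_def)

text \<open>Cauchy--Binet, summed over all (not only increasing) row selections \<open>f\<close>: expanding the
  determinant multilinearly in its rows gives a sum over \<open>f\<close>, and averaging over the \<open>k!\<close>
  permutations of \<open>f\<close> turns each summand into \<open>\<bar>det (minor k A f g)\<bar>\<^sup>2\<close>.\<close>
theorem cauchy_binet_gram:
  fixes A :: "complex mat"
  assumes A: "A \<in> carrier_mat n m" and g: "\<forall>a<k. g a < m"
  shows "of_nat (fact k) * det (minor k (mat_adjoint A * A) g g)
    = of_real (\<Sum>f\<in>index_maps k n. (cmod (det (minor k A f g)))\<^sup>2)"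
proof -
  let ?v = "\<lambda>a l. cnj (A $$ (l, g a)) \<cdot>\<^sub>v vec k (\<lambda>b. A $$ (l, g b))"
  let ?P = "{p. p permutes {0..<k}}"
  define c where "c f = (\<Prod>a=0..<k. A $$ (f a, g a))" for f
  have rows: "minor k (mat_adjoint A * A) g g
      = mat\<^sub>r k k (\<lambda>a. finsum_vec TYPE(complex) k (?v a) {0..<n})"
    using A g
    by (intro eq_matI) (auto simp: minor_def index_finsum_vec scalar_prod_def intro!: sum.cong)
  have summand: "det (mat\<^sub>r k k (\<lambda>a. ?v a (f a))) = cnj (c f) * det (minor k A f g)" for f
  proof -
    have "mat\<^sub>r k k (\<lambda>a. vec k (\<lambda>b. A $$ (f a, g b))) = minor k A f g"
      by (intro eq_matI) (auto simp: minor_def)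
    then show ?thesis by (subst det_rows_mul) (auto simp: c_def)
  qed
  have expand: "det (minor k (mat_adjoint A * A) g g)
      = (\<Sum>f\<in>index_maps k n. cnj (c (f \<circ> p)) * (signof p * det (minor k A f g)))"
    if p: "p permutes {0..<k}" for p
  proof -
    have "det (minor k (mat_adjoint A * A) g g)
        = (\<Sum>f\<in>index_maps k n. cnj (c f) * det (minor k A f g))"
      unfolding rows index_maps_def summand[symmetric] by (rule det_linear_rows_sum) auto
    also have "\<dots> = (\<Sum>f\<in>index_maps k n. cnj (c (f \<circ> p)) * det (minor k A (f \<circ> p) g))"
      by (rule sum_index_maps_comp_permutes[OF p, symmetric])
    finally show ?thesis by (simp add: det_minor_permute_rows[OF p])
  qed
  have "of_nat (fact k) * det (minor k (mat_adjoint A * A) g g)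
      = (\<Sum>p\<in>?P. det (minor k (mat_adjoint A * A) g g))"
    using card_permutations[of "{0..<k}" k] by simp
  also have "\<dots> = (\<Sum>p\<in>?P. \<Sum>f\<in>index_maps k n. cnj (c (f \<circ> p)) * (signof p * det (minor k A f g)))"
    using expand by (intro sum.cong) auto
  also have "\<dots> = (\<Sum>f\<in>index_maps k n. det (minor k A f g) * cnj (\<Sum>p\<in>?P. signof p * c (f \<circ> p)))"
    by (subst sum.swap) (simp add: sum_distrib_left mult_ac)
  also have "\<dots> = (\<Sum>f\<in>index_maps k n. det (minor k A f g) * cnj (det (minor k A f g)))"
    by (simp add: det_minor_as_sum c_def)
  finally show ?thesis unfolding of_real_sum complex_norm_square by simp
qed

section \<open>Sums over injective index maps\<close>

lemma pick_bij_betw: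
  assumes "finite K" "card K = k"
  shows "bij_betw (pick K) {0..<k} K"
proof -
  have inj: "inj_on (pick K) {0..<k}"
  proof (rule linorder_inj_onI)
    fix a b assume "a < b" "b \<in> {0..<k}"
    then show "pick K a \<noteq> pick K b" using pick_mono[of b K a] assms by auto
  qed auto
  moreover have "pick K ` {0..<k} \<subseteq> K" using assms pick_in_set by auto
  moreover have "card (pick K ` {0..<k}) = card K" using card_image[OF inj] assms by simp
  ultimately show ?thesis unfolding bij_betw_def using card_subset_eq[OF assms(1)] by blast
qed

lemma pick_atLeastLessThan:
  assumes "i < n"
  shows "pick {0..<n} i = i"
proof -
  have "{a \<in> {0..<n}. a < i} = {0..<i}" using assms by auto
  then show ?thesis using pick_card_in_set[of i "{0..<n}"] assms by simp
qed

lemma pick_less: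
  assumes "K \<subseteq> {0..<m}" "card K = k" "a < k"
  shows "pick K a < m"
  using pick_in_set[of a K] assms by auto

lemma pick_eq_iff:
  assumes "card K = k" "a < k" "b < k"
  shows "pick K a = pick K b \<longleftrightarrow> a = b"
proof -
  have "pick K a < pick K b" if "a < b" "b < k" for a b
    using pick_mono[of b K a] assms(1) that by auto
  then show ?thesis using assms(2,3) by (metis less_irrefl nat_neq_iff)
qed

definition pick_map :: "nat \<Rightarrow> nat set \<Rightarrow> nat \<Rightarrow> nat" where
  "pick_map k K i = (if i < k then pick K i else i)"

context
  fixes K :: "nat set" and k n :: nat
  assumes K: "K \<subseteq> {0..<n}" "card K = k"
begin

lemma bij_betw_pick_map: "bij_betw (pick_map k K) {0..<k} K"
  using pick_bij_betw[OF finite_subset[OF K(1)] K(2)]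
    bij_betw_cong[of "{0..<k}" "pick K" "pick_map k K" K]
  by (simp add: pick_map_def)

lemma pick_map_in_index_maps: "pick_map k K \<in> index_maps k n"
proof -
  have "pick_map k K i < n" if "i < k" for i
    using bij_betw_apply[OF bij_betw_pick_map, of i] K(1) that by auto
  then show ?thesis unfolding index_maps_def by (simp add: pick_map_def)
qed

lemma index_maps_with_image:
  "{g \<in> index_maps k n. inj_on g {0..<k} \<and> g ` {0..<k} = K}
    = (\<lambda>p. pick_map k K \<circ> p) ` {p. p permutes {0..<k}}"
proof (intro equalityI subsetI)
  fix g assume "g \<in> {g \<in> index_maps k n. inj_on g {0..<k} \<and> g ` {0..<k} = K}"
  then have g: "g \<in> index_maps k n" "bij_betw g {0..<k} K" unfolding bij_betw_def by auto
  define p where "p i = (if i < k then inv_into {0..<k} (pick_map k K) (g i) else i)" for i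
  have "bij_betw (inv_into {0..<k} (pick_map k K) \<circ> g) {0..<k} {0..<k}"
    using g(2) bij_betw_inv_into[OF bij_betw_pick_map] by (rule bij_betw_trans)
  then have "bij_betw p {0..<k} {0..<k}"
    using bij_betw_cong[of "{0..<k}" "inv_into {0..<k} (pick_map k K) \<circ> g" p] by (simp add: p_def)
  then have "p permutes {0..<k}"
    by (rule bij_imp_permutes) (simp add: p_def)
  moreover have "g = pick_map k K \<circ> p"
  proof
    fix i show "g i = (pick_map k K \<circ> p) i"
    proof (cases "i < k")
      case True
      then have "g i \<in> pick_map k K ` {0..<k}"
        using g(2) bij_betw_pick_map unfolding bij_betw_def by auto
      then show ?thesis using True by (simp add: p_def f_inv_into_f)
    next
      case False
      then show ?thesis using g(1) unfolding index_maps_def by (simp add: p_def pick_map_def)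
    qed
  qed
  ultimately show "g \<in> (\<lambda>p. pick_map k K \<circ> p) ` {p. p permutes {0..<k}}" by blast
next
  fix g assume "g \<in> (\<lambda>p. pick_map k K \<circ> p) ` {p. p permutes {0..<k}}"
  then obtain p where p: "p permutes {0..<k}" and g: "g = pick_map k K \<circ> p" by auto
  have "bij_betw g {0..<k} K"
    unfolding g using permutes_imp_bij[OF p] bij_betw_pick_map by (rule bij_betw_trans)
  then show "g \<in> {g \<in> index_maps k n. inj_on g {0..<k} \<and> g ` {0..<k} = K}"
    using comp_permutes_in_index_maps[OF pick_map_in_index_maps p] g
    unfolding bij_betw_def by auto
qed

lemma inj_on_comp_pick_map: "inj_on (\<lambda>p. pick_map k K \<circ> p) {p. p permutes {0..<k}}"
proof (rule inj_onI)
  fix p q assume p: "p \<in> {p. p permutes {0..<k}}" and q: "q \<in> {p. p permutes {0..<k}}"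
    and eq: "pick_map k K \<circ> p = pick_map k K \<circ> q"
  show "p = q"
  proof
    fix i show "p i = q i"
    proof (cases "i < k")
      case True
      then have "p i \<in> {0..<k}" "q i \<in> {0..<k}" using p q permutes_in_image by fastforce+
      then show ?thesis using eq bij_betw_pick_map unfolding bij_betw_def
        by (metis comp_apply inj_onD)
    qed (use p q permutes_not_in[of p "{0..<k}" i] permutes_not_in[of q "{0..<k}" i] in simp)
  qed
qed

end

text \<open>Each injective map in \<open>index_maps k n\<close> is \<open>pick_map k K \<circ> p\<close> for a unique \<open>k\<close>-set
  \<open>K\<close> and permutation \<open>p\<close> of \<open>{0..<k}\<close>.\<close>
lemma sum_index_maps_symmetric:
  fixes h :: "(nat \<Rightarrow> nat) \<Rightarrow> 'a :: comm_semiring_1"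
  assumes perm: "\<And>g p. g \<in> index_maps k n \<Longrightarrow> p permutes {0..<k} \<Longrightarrow> h (g \<circ> p) = h g"
    and non_inj: "\<And>g. g \<in> index_maps k n \<Longrightarrow> \<not> inj_on g {0..<k} \<Longrightarrow> h g = 0"
  shows "(\<Sum>g\<in>index_maps k n. h g)
    = of_nat (fact k) * (\<Sum>K | K \<subseteq> {0..<n} \<and> card K = k. h (pick_map k K))"
proof -
  let ?I = "{g \<in> index_maps k n. inj_on g {0..<k}}"
  let ?S = "{K. K \<subseteq> {0..<n} \<and> card K = k}"
  have "(\<Sum>g\<in>index_maps k n. h g) = (\<Sum>g\<in>?I. h g)"
    using non_inj by (intro sum.mono_neutral_right finite_index_maps) auto
  also have "\<dots> = (\<Sum>K\<in>?S. \<Sum>g | g \<in> ?I \<and> g ` {0..<k} = K. h g)"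
  proof (rule sum.group[symmetric])
    show "finite ?I" using finite_index_maps by auto
    show "finite ?S" by (rule finite_subset[of _ "Pow {0..<n}"]) auto
    show "(\<lambda>g. g ` {0..<k}) ` ?I \<subseteq> ?S"
      unfolding index_maps_def by (auto simp: card_image)
  qed
  also have "\<dots> = (\<Sum>K\<in>?S. of_nat (fact k) * h (pick_map k K))"
  proof (rule sum.cong[OF refl])
    fix K assume K: "K \<in> ?S"
    then have "{g. g \<in> ?I \<and> g ` {0..<k} = K} = (\<lambda>p. pick_map k K \<circ> p) ` {p. p permutes {0..<k}}"
      using index_maps_with_image[of K n k] by auto
    then have "(\<Sum>g | g \<in> ?I \<and> g ` {0..<k} = K. h g)
        = (\<Sum>p | p permutes {0..<k}. h (pick_map k K \<circ> p))"
      using sum.reindex[OF inj_on_comp_pick_map, of K n k h] K by (simp add: comp_def)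
    also have "\<dots> = (\<Sum>p | p permutes {0..<k}. h (pick_map k K))"
      using perm pick_map_in_index_maps K by (intro sum.cong) auto
    finally show "(\<Sum>g | g \<in> ?I \<and> g ` {0..<k} = K. h g) = of_nat (fact k) * h (pick_map k K)"
      using card_permutations[of "{0..<k}" k] by simp
  qed
  finally show ?thesis by (simp add: sum_distrib_left)
qed

lemma card_inj_index_maps:
  "(\<Sum>f\<in>index_maps k n. if inj_on f {0..<k} then 1 else 0 :: real) = fact k * (n choose k)"
proof -
  have "(\<Sum>f\<in>index_maps k n. if inj_on f {0..<k} then 1 else 0 :: real)
      = fact k * (\<Sum>K | K \<subseteq> {0..<n} \<and> card K = k. if inj_on (pick_map k K) {0..<k} then 1 else 0)"
    by (subst sum_index_maps_symmetric)
      (auto simp: comp_inj_on_iff[OF permutes_inj_on, symmetric] permutes_image)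
  also have "(\<Sum>K | K \<subseteq> {0..<n} \<and> card K = k. if inj_on (pick_map k K) {0..<k} then 1 else 0)
      = (\<Sum>K | K \<subseteq> {0..<n} \<and> card K = k. 1 :: real)"
    using bij_betw_pick_map by (intro sum.cong) (auto simp: bij_betw_def)
  finally show ?thesis by (simp add: n_subsets)
qed

section \<open>Volumes of column submatrices\<close>

lemma col_sub_eq:
  assumes "A \<in> carrier_mat n m" "K \<subseteq> {0..<m}" "card K = k"
  shows "col_sub A K = mat n k (\<lambda>(i,j). A $$ (i, pick K j))"
proof -
  have "{i. i < dim_row A \<and> i \<in> {0..<n}} = {0..<n}" "{j. j < dim_col A \<and> j \<in> K} = K"
    using assms by auto
  then show ?thesis using assms
    unfolding col_sub_def submatrix_def by (intro eq_matI) (auto simp: pick_atLeastLessThan)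
qed

lemma mat_adjoint_col_sub_mult:
  fixes A :: "complex mat"
  assumes A: "A \<in> carrier_mat n m" and K: "K \<subseteq> {0..<m}" "card K = k"
  shows "mat_adjoint (col_sub A K) * col_sub A K = minor k (mat_adjoint A * A) (pick K) (pick K)"
  using A pick_less[OF K] unfolding col_sub_eq[OF A K] minor_def
  by (intro eq_matI) (auto simp: scalar_prod_def intro!: sum.cong)

lemma vol_col_sub_sq:
  fixes A :: "complex mat"
  assumes A: "A \<in> carrier_mat n m" and K: "K \<subseteq> {0..<m}" "card K = k"
  shows "(vol (col_sub A K))\<^sup>2
    = (\<Sum>f\<in>index_maps k n. (cmod (det (minor k A f (pick K))))\<^sup>2) / fact k"
proof -
  define s where "s = (\<Sum>f\<in>index_maps k n. (cmod (det (minor k A f (pick K))))\<^sup>2)"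
  have "of_nat (fact k) * det (mat_adjoint (col_sub A K) * col_sub A K) = of_real s"
    unfolding mat_adjoint_col_sub_mult[OF A K] s_def using pick_less[OF K]
    by (intro cauchy_binet_gram[OF A]) auto
  then have "det (mat_adjoint (col_sub A K) * col_sub A K) = of_real (s / fact k)"
    by (simp add: field_simps)
  moreover have "s \<ge> 0" by (simp add: s_def sum_nonneg)
  ultimately show ?thesis unfolding vol_def s_def[symmetric] by (simp add: norm_divide)
qed

lemma sum_power2_deviation_mean:
  fixes x :: "'a \<Rightarrow> real"
  assumes "finite S" "S \<noteq> {}"
  shows "(\<Sum>i\<in>S. (x i - sum x S / card S)\<^sup>2) = (\<Sum>i\<in>S. (x i)\<^sup>2) - (sum x S)\<^sup>2 / card S"
proof -
  define c where "c = sum x S / card S"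
  have "card S > 0" using assms by (simp add: card_gt_0_iff)
  have "(\<Sum>i\<in>S. (x i - c)\<^sup>2) = (\<Sum>i\<in>S. (x i)\<^sup>2 - 2 * c * x i + c\<^sup>2)"
    by (intro sum.cong) (auto simp: power2_eq_square algebra_simps)
  also have "\<dots> = (\<Sum>i\<in>S. (x i)\<^sup>2) - 2 * c * sum x S + card S * c\<^sup>2"
    by (simp add: sum.distrib sum_subtractf sum_distrib_left)
  also have "\<dots> = (\<Sum>i\<in>S. (x i)\<^sup>2) - (sum x S)\<^sup>2 / card S"
    using \<open>card S > 0\<close> by (simp add: c_def power2_eq_square field_simps)
  finally show ?thesis unfolding c_def .
qed

lemma sum_le_sqrt_card_mult_sum_power2:
  fixes x :: "'a \<Rightarrow> real"
  assumes "finite S"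
  shows "sum x S \<le> sqrt (card S * (\<Sum>i\<in>S. (x i)\<^sup>2))"
proof (cases "S = {}")
  case False
  have "0 \<le> (\<Sum>i\<in>S. (x i)\<^sup>2) - (sum x S)\<^sup>2 / card S"
    by (metis sum_power2_deviation_mean[OF assms False] sum_nonneg zero_le_power2)
  then have "(sum x S)\<^sup>2 \<le> card S * (\<Sum>i\<in>S. (x i)\<^sup>2)"
    using assms False by (simp add: card_gt_0_iff field_simps)
  then show ?thesis by (meson real_le_rsqrt abs_ge_self order_trans real_sqrt_abs real_sqrt_le_iff)
qed simp

lemma sum_eq_sqrt_card_mult_sum_power2_iff:
  fixes x :: "'a \<Rightarrow> real"
  assumes "finite S" "S \<noteq> {}"
  shows "sum x S = sqrt (card S * (\<Sum>i\<in>S. (x i)\<^sup>2))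
    \<longleftrightarrow> (\<forall>i\<in>S. x i = sqrt ((\<Sum>i\<in>S. (x i)\<^sup>2) / card S))"
proof -
  define n where "n = real (card S)"
  define q where "q = (\<Sum>i\<in>S. (x i)\<^sup>2)"
  have n: "n > 0" using assms by (simp add: n_def card_gt_0_iff)
  have q: "q \<ge> 0" by (simp add: q_def sum_nonneg)
  have "sqrt (n * q) = sqrt (n\<^sup>2) * sqrt (q / n)"
    by (subst real_sqrt_mult[symmetric]) (use n in \<open>simp add: power2_eq_square field_simps\<close>)
  then have sqrt_nq: "sqrt (n * q) = n * sqrt (q / n)" using n by simp
  have dev: "(\<Sum>i\<in>S. (x i - sum x S / n)\<^sup>2) = q - (sum x S)\<^sup>2 / n"
    unfolding n_def q_def by (rule sum_power2_deviation_mean[OF assms])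
  show ?thesis unfolding n_def[symmetric] q_def[symmetric]
  proof
    assume eq: "sum x S = sqrt (n * q)"
    define c where "c = sum x S / n"
    have "(sum x S)\<^sup>2 = n * q" using eq n q by simp
    then have "(\<Sum>i\<in>S. (x i - c)\<^sup>2) = 0" unfolding c_def dev using n by simp
    then have "\<forall>i\<in>S. x i = c" using assms(1) by (simp add: sum_nonneg_eq_0_iff)
    moreover have "c = sqrt (q / n)" using eq sqrt_nq n by (simp add: c_def)
    ultimately show "\<forall>i\<in>S. x i = sqrt (q / n)" by simp
  next
    assume "\<forall>i\<in>S. x i = sqrt (q / n)"
    then show "sum x S = sqrt (n * q)" using sqrt_nq by (simp add: n_def)
  qed
qed

lemma sum_eq_sum_power2_iff:
  fixes x :: "'a \<Rightarrow> real"
  assumes "finite S" "\<forall>i\<in>S. 0 \<le> x i \<and> x i \<le> 1"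
  shows "sum x S = (\<Sum>i\<in>S. (x i)\<^sup>2) \<longleftrightarrow> (\<forall>i\<in>S. x i = 0 \<or> x i = 1)"
proof -
  have "sum x S = (\<Sum>i\<in>S. (x i)\<^sup>2) \<longleftrightarrow> (\<Sum>i\<in>S. x i - (x i)\<^sup>2) = 0"
    by (simp add: sum_subtractf)
  also have "\<dots> \<longleftrightarrow> (\<forall>i\<in>S. x i - (x i)\<^sup>2 = 0)"
    using assms by (intro sum_nonneg_eq_0_iff) (auto simp: power2_eq_square mult_left_le)
  also have "\<dots> \<longleftrightarrow> (\<forall>i\<in>S. x i = 0 \<or> x i = 1)"
    by (simp add: power2_eq_square right_diff_distrib[symmetric])
  finally show ?thesis .
qed

lemma binomial_strict_mono_left:
  assumes "m < n" "0 < k" "k \<le> n"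
  shows "m choose k < n choose k"
proof -
  obtain n' k' where n: "n = Suc n'" and k: "k = Suc k'" using assms by (cases n; cases k) auto
  have "m choose k \<le> n' choose k" using assms n by (intro binomial_right_mono) auto
  moreover have "0 < n' choose k'" using assms n k by simp
  moreover have "n choose k = (n' choose k') + (n' choose k)" unfolding n k by simp
  ultimately show ?thesis by linarith
qed

section \<open>Parseval matrices\<close>

locale parseval_matrix =
  fixes Phi :: "complex mat" and N M :: nat
  assumes carrier: "Phi \<in> carrier_mat N M"
    and rows_orthonormal: "Phi * mat_adjoint Phi = 1\<^sub>m N"
begin

lemma row_inner:
  assumes "i < N" "i' < N"
  shows "(\<Sum>j=0..<M. Phi $$ (i,j) * cnj (Phi $$ (i',j))) = (if i = i' then 1 else 0)"
proof -
  have "(Phi * mat_adjoint Phi) $$ (i,i') = (\<Sum>j=0..<M. Phi $$ (i,j) * cnj (Phi $$ (i',j)))"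
    using assms carrier by (auto simp: scalar_prod_def intro!: sum.cong)
  then show ?thesis using rows_orthonormal assms by simp
qed

definition gram :: "complex mat" where
  "gram = mat_adjoint Phi * Phi"

lemma gram_carrier: "gram \<in> carrier_mat M M"
  using carrier by (auto simp: gram_def)

lemma gram_dim [simp]: "dim_row gram = M" "dim_col gram = M"
  using gram_carrier by auto

lemma gram_index:
  assumes "x < M" "y < M"
  shows "gram $$ (x,y) = (\<Sum>l=0..<N. cnj (Phi $$ (l,x)) * Phi $$ (l,y))"
  using assms carrier by (auto simp: gram_def scalar_prod_def intro!: sum.cong)

lemma gram_cnj:
  assumes "x < M" "y < M"
  shows "gram $$ (y,x) = cnj (gram $$ (x,y))"
  using assms by (simp add: gram_index mult.commute)

lemma gram_idem: "gram * gram = gram"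
proof -
  have adj: "mat_adjoint Phi \<in> carrier_mat M N" using carrier by auto
  have "gram * gram = mat_adjoint Phi * (Phi * (mat_adjoint Phi * Phi))"
    unfolding gram_def by (rule assoc_mult_mat[OF adj carrier mult_carrier_mat[OF adj carrier]])
  also have "Phi * (mat_adjoint Phi * Phi) = (Phi * mat_adjoint Phi) * Phi"
    by (rule assoc_mult_mat[OF carrier adj carrier, symmetric])
  also have "\<dots> = Phi"
    by (simp add: rows_orthonormal left_mult_one_mat[OF carrier])
  finally show ?thesis unfolding gram_def .
qed

lemma complement_gram_idem: "(1\<^sub>m M - gram) * (1\<^sub>m M - gram) = 1\<^sub>m M - gram"
proof -
  let ?Q = "1\<^sub>m M - gram"
  have Q: "?Q \<in> carrier_mat M M" using gram_carrier by (simp add: minus_carrier_mat)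
  have "?Q * gram = 1\<^sub>m M * gram - gram * gram"
    by (rule minus_mult_distrib_mat[OF one_carrier_mat gram_carrier gram_carrier])
  then have "?Q * gram = 0\<^sub>m M M"
    using gram_carrier by (simp add: gram_idem left_mult_one_mat[OF gram_carrier])
  moreover have "?Q * ?Q = ?Q * 1\<^sub>m M - ?Q * gram"
    by (rule mult_minus_distrib_mat[OF Q one_carrier_mat gram_carrier])
  moreover have "?Q * 1\<^sub>m M - 0\<^sub>m M M = ?Q" using Q by (intro eq_matI) auto
  ultimately show ?thesis by simp
qed

definition sq_norm_col :: "nat \<Rightarrow> real" where
  "sq_norm_col x = (\<Sum>l=0..<N. (cmod (Phi $$ (l,x)))\<^sup>2)"

lemma gram_diag: "x < M \<Longrightarrow> gram $$ (x,x) = of_real (sq_norm_col x)"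
  unfolding sq_norm_col_def of_real_sum complex_norm_square
  by (simp add: gram_index mult.commute)

lemma sum_sq_norm_col: "(\<Sum>x=0..<M. sq_norm_col x) = N"
proof -
  have "(\<Sum>x=0..<M. of_real (sq_norm_col x))
      = (\<Sum>l=0..<N. \<Sum>x=0..<M. Phi $$ (l,x) * cnj (Phi $$ (l,x)))"
    unfolding sq_norm_col_def of_real_sum complex_norm_square by (rule sum.swap)
  also have "\<dots> = (\<Sum>l=0..<N. 1 :: complex)" by (intro sum.cong) (auto simp: row_inner)
  finally have "complex_of_real (\<Sum>x=0..<M. sq_norm_col x) = complex_of_real (real N)"
    by (simp add: of_real_sum)
  then show ?thesis by (simp only: of_real_eq_iff)
qed

lemma col_eq_zero_iff: "x < M \<Longrightarrow> col Phi x = 0\<^sub>v N \<longleftrightarrow> sq_norm_col x = 0"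
  using carrier unfolding sq_norm_col_def
  by (subst sum_nonneg_eq_0_iff) (auto simp: vec_eq_iff)

text \<open>For a unit column, idempotence of the Gram matrix reads
  \<open>1 = gram x x = (\<Sum>y. \<bar>gram x y\<bar>\<^sup>2)\<close>, so all other entries of row \<open>x\<close> vanish.\<close>
lemma gram_eq_0_if_unit_col:
  assumes x: "x < M" and y: "y < M" "y \<noteq> x" and unit: "sq_norm_col x = 1"
  shows "gram $$ (x,y) = 0"
proof -
  let ?c = "\<lambda>z. (cmod (gram $$ (x,z)))\<^sup>2"
  have "of_real (\<Sum>z=0..<M. ?c z) = (\<Sum>z=0..<M. gram $$ (x,z) * gram $$ (z,x))"
    unfolding of_real_sum complex_norm_square
    by (intro sum.cong refl) (simp add: gram_cnj[OF x, symmetric])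
  also have "\<dots> = (gram * gram) $$ (x,x)"
    using x by (auto simp: scalar_prod_def intro!: sum.cong)
  also have "\<dots> = 1" using x unit by (simp add: gram_idem gram_diag)
  finally have "(\<Sum>z=0..<M. ?c z) = 1" by (metis of_real_eq_1_iff)
  moreover have "(\<Sum>z=0..<M. ?c z) = ?c x + (\<Sum>z\<in>{0..<M} - {x}. ?c z)"
    using x by (subst sum.remove[of _ x]) auto
  moreover have "?c x = 1" using x unit by (simp add: gram_diag)
  ultimately have "(\<Sum>z\<in>{0..<M} - {x}. ?c z) = 0" by simp
  then show ?thesis using y by (subst (asm) sum_nonneg_eq_0_iff) auto
qed

lemma gram_eq_0_if_zero_col:
  assumes "x < M" "y < M" "col Phi x = 0\<^sub>v N \<or> col Phi y = 0\<^sub>v N"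
  shows "gram $$ (x,y) = 0"
proof -
  have "Phi $$ (l,z) = 0" if "z < M" "col Phi z = 0\<^sub>v N" "l < N" for l z
    using that carrier_matD[OF carrier] by (metis index_col index_zero_vec(1))
  then show ?thesis using assms by (auto simp: gram_index intro!: sum.neutral)
qed

lemma cinner_col:
  assumes "x < M" "y < M"
  shows "cinner (col Phi x) (col Phi y) = gram $$ (y,x)"
  unfolding gram_index[OF assms(2,1)] cinner_def using carrier assms
  by (auto simp: mult.commute atLeast0LessThan intro!: sum.cong)

text \<open>Stacking \<open>Phi\<close> on top of \<open>1 - gram\<close> gives a matrix with orthonormal columns,
  because \<open>1 - gram\<close> is a self-adjoint projection.\<close>
definition completion :: "complex mat" where
  "completion = mat (N + M) M
    (\<lambda>(l,x). if l < N then Phi $$ (l,x) else (1\<^sub>m M - gram) $$ (l - N, x))"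

lemma completion_carrier: "completion \<in> carrier_mat (N + M) M"
  by (simp add: completion_def)

lemma completion_index_upper: "l < N \<Longrightarrow> x < M \<Longrightarrow> completion $$ (l,x) = Phi $$ (l,x)"
  by (simp add: completion_def)

lemma completion_index_lower:
  "j < M \<Longrightarrow> x < M \<Longrightarrow> completion $$ (N + j, x) = (if j = x then 1 else 0) - gram $$ (j,x)"
  by (simp add: completion_def)

lemma completion_orthonormal: "mat_adjoint completion * completion = 1\<^sub>m M"
proof -
  let ?Q = "1\<^sub>m M - gram"
  have split_sum: "(\<Sum>l=0..<N+M. h l) = (\<Sum>l=0..<N. h l) + (\<Sum>j=0..<M. h (N + j))"
    for h :: "nat \<Rightarrow> complex"
    using sum.atLeastLessThan_concat[of 0 N "N+M" h] sum.shift_bounds_nat_ivl[of h 0 N M]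
    by (simp add: add.commute)
  have "(mat_adjoint completion * completion) $$ (x,y) = (if x = y then 1 else 0)"
    if x: "x < M" and y: "y < M" for x y
  proof -
    have "(mat_adjoint completion * completion) $$ (x,y)
        = (\<Sum>l=0..<N+M. cnj (completion $$ (l,x)) * completion $$ (l,y))"
      using x y completion_carrier by (auto simp: scalar_prod_def intro!: sum.cong)
    also have "\<dots> = (\<Sum>l=0..<N. cnj (Phi $$ (l,x)) * Phi $$ (l,y))
        + (\<Sum>j=0..<M. cnj (?Q $$ (j,x)) * ?Q $$ (j,y))"
      using x y by (simp add: split_sum completion_def)
    also have "(\<Sum>j=0..<M. cnj (?Q $$ (j,x)) * ?Q $$ (j,y)) = (?Q * ?Q) $$ (x,y)"
      using x y by (auto simp: scalar_prod_def gram_cnj[of _ x, symmetric] intro!: sum.cong)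
    finally show ?thesis using x y by (simp add: complement_gram_idem gram_index)
  qed
  then show ?thesis using completion_carrier by (intro eq_matI) auto
qed

lemma minor_completion:
  assumes "f \<in> index_maps k N" "\<forall>a<k. g a < M"
  shows "minor k completion f g = minor k Phi f g"
  using assms by (intro eq_matI) (auto simp: minor_def index_maps_def completion_index_upper)

lemma sum_minors_completion:
  assumes K: "K \<subseteq> {0..<M}" "card K = k"
  shows "(\<Sum>f\<in>index_maps k (N + M). (cmod (det (minor k completion f (pick K))))\<^sup>2) = fact k"
proof -
  have "mat_adjoint (col_sub completion K) * col_sub completion K = 1\<^sub>m k"
    unfolding mat_adjoint_col_sub_mult[OF completion_carrier K] completion_orthonormal minor_def
    using pick_less[OF K] pick_eq_iff[OF K(2)] by (intro eq_matI) auto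
  then have "(vol (col_sub completion K))\<^sup>2 = 1" by (simp add: vol_def)
  then show ?thesis using vol_col_sub_sq[OF completion_carrier K] by simp
qed

text \<open>The Cauchy--Binet sum for \<open>Phi\<^sub>K\<close> is the part of the one for the orthonormal
  columns of \<open>completion\<close> that uses only rows of \<open>Phi\<close>.\<close>
lemma vol_col_sub_sq_eq:
  assumes K: "K \<subseteq> {0..<M}" "card K = k"
  shows "(vol (col_sub Phi K))\<^sup>2 = 1 - (\<Sum>f\<in>index_maps k (N + M) - index_maps k N.
      (cmod (det (minor k completion f (pick K))))\<^sup>2) / fact k"
proof -
  let ?h = "\<lambda>f. (cmod (det (minor k completion f (pick K))))\<^sup>2"
  have "fact k = (\<Sum>f\<in>index_maps k (N + M). ?h f)" using sum_minors_completion[OF K] by simp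
  also have "\<dots> = (\<Sum>f\<in>index_maps k (N + M) - index_maps k N. ?h f) + (\<Sum>f\<in>index_maps k N. ?h f)"
    by (rule sum.subset_diff[OF index_maps_mono finite_index_maps]) simp
  also have "(\<Sum>f\<in>index_maps k N. ?h f) = (vol (col_sub Phi K))\<^sup>2 * fact k"
    using pick_less[OF K] by (simp add: vol_col_sub_sq[OF carrier K] minor_completion)
  finally show ?thesis by (simp add: field_simps)
qed

lemma vol_col_sub_le_1:
  assumes "K \<subseteq> {0..<M}" "card K = k"
  shows "vol (col_sub Phi K) \<le> 1"
proof -
  have "(vol (col_sub Phi K))\<^sup>2 \<le> 1" by (simp add: vol_col_sub_sq_eq[OF assms] sum_nonneg)
  then show ?thesis using abs_square_le_1 by (fastforce simp: vol_def)
qed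

text \<open>If \<open>vol (col_sub Phi K) = 1\<close>, every minor of \<open>completion\<close> that uses a row below
  \<open>Phi\<close> vanishes.  Replacing a row of a nonsingular minor of \<open>Phi\<close> by such a row thus always
  gives determinant \<open>0\<close>, so by Cramer's rule the row vanishes on \<open>K\<close>.\<close>
lemma completion_lower_row_eq_0:
  assumes K: "K \<subseteq> {0..<M}" "card K = k" and vol: "vol (col_sub Phi K) = 1"
    and j: "j < M" and x: "x \<in> K"
  shows "completion $$ (N + j, x) = 0"
proof -
  have "(\<Sum>f\<in>index_maps k (N + M) - index_maps k N.
      (cmod (det (minor k completion f (pick K))))\<^sup>2) = 0"
    using vol_col_sub_sq_eq[OF K] vol by simp
  then have outside: "det (minor k completion f (pick K)) = 0"
    if "f \<in> index_maps k (N + M) - index_maps k N" for f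
    using that finite_index_maps by (subst (asm) sum_nonneg_eq_0_iff) auto
  have "(\<Sum>f\<in>index_maps k N. (cmod (det (minor k Phi f (pick K))))\<^sup>2) \<noteq> 0"
    using vol_col_sub_sq[OF carrier K] vol by auto
  then obtain f0 where f0: "f0 \<in> index_maps k N" and nonsing: "det (minor k Phi f0 (pick K)) \<noteq> 0"
    by (metis (no_types, lifting) norm_zero sum.neutral zero_power2)
  define r where "r = vec k (\<lambda>c. completion $$ (N + j, pick K c))"
  let ?B = "transpose_mat (minor k Phi f0 (pick K))"
  have "r = 0\<^sub>v k"
  proof (rule replace_col_det_zero_imp_zero)
    show "?B \<in> carrier_mat k k" "r \<in> carrier_vec k" by (simp_all add: r_def)
    show "det ?B \<noteq> 0" using nonsing by (simp add: det_transpose[OF minor_carrier])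
    fix a assume a: "a < k"
    have "replace_col ?B r a = transpose_mat (minor k completion (f0(a := N + j)) (pick K))"
      using f0 pick_less[OF K] j unfolding replace_col_def minor_def r_def index_maps_def
      by (intro eq_matI) (auto simp: completion_index_upper)
    moreover have "f0(a := N + j) \<in> index_maps k (N + M) - index_maps k N"
      using f0 a j unfolding index_maps_def by auto
    ultimately show "det (replace_col ?B r a) = 0"
      using outside by (simp add: det_transpose[OF minor_carrier])
  qed
  moreover obtain b where "b < k" "pick K b = x"
    using x bij_betw_imp_surj_on[OF pick_bij_betw[OF finite_subset[OF K(1)] K(2)]] by force
  ultimately show ?thesis unfolding r_def by (metis index_vec index_zero_vec(1))
qed

lemma sq_norm_col_eq_1_if_vol_col_sub_eq_1:
  assumes K: "K \<subseteq> {0..<M}" "card K = k" and vol: "vol (col_sub Phi K) = 1" and x: "x \<in> K"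
  shows "sq_norm_col x = 1"
proof -
  have xM: "x < M" using x K by auto
  then have "gram $$ (x,x) = 1"
    using completion_lower_row_eq_0[OF K vol xM x] by (simp add: completion_index_lower)
  then show ?thesis by (metis gram_diag[OF xM] of_real_eq_1_iff)
qed

lemma sum_sq_minors_rows:
  assumes f: "f \<in> index_maps k N"
  shows "(\<Sum>g\<in>index_maps k M. (cmod (det (minor k Phi f g)))\<^sup>2)
    = fact k * (if inj_on f {0..<k} then 1 else 0)"
proof -
  have fN: "\<forall>a<k. f a < N" using f by (auto simp: index_maps_def)
  have adj: "mat_adjoint Phi \<in> carrier_mat M N" using carrier by auto
  have "of_nat (fact k) * det (minor k (Phi * mat_adjoint Phi) f f)
      = of_real (\<Sum>g\<in>index_maps k M. (cmod (det (minor k (mat_adjoint Phi) g f)))\<^sup>2)"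
    using cauchy_binet_gram[OF adj fN] by simp
  also have "(\<Sum>g\<in>index_maps k M. (cmod (det (minor k (mat_adjoint Phi) g f)))\<^sup>2)
      = (\<Sum>g\<in>index_maps k M. (cmod (det (minor k Phi f g)))\<^sup>2)"
    using fN carrier
    by (intro sum.cong refl)
      (auto simp: index_maps_def minor_mat_adjoint det_mat_adjoint[OF minor_carrier])
  also have "det (minor k (Phi * mat_adjoint Phi) f f) = (if inj_on f {0..<k} then 1 else 0)"
  proof (cases "inj_on f {0..<k}")
    case True
    then have "minor k (1\<^sub>m N :: complex mat) f f = 1\<^sub>m k"
      using fN by (intro eq_matI) (auto simp: minor_def inj_on_eq_iff)
    then show ?thesis using True by (simp add: rows_orthonormal)
  qed (simp add: det_minor_not_inj_cols)
  finally have "complex_of_real (\<Sum>g\<in>index_maps k M. (cmod (det (minor k Phi f g)))\<^sup>2)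
      = complex_of_real (fact k * (if inj_on f {0..<k} then 1 else 0))"
    by (cases "inj_on f {0..<k}") simp_all
  then show ?thesis by (simp only: of_real_eq_iff)
qed

lemma sum_vol_col_sub_sq:
  "(\<Sum>K | K \<subseteq> {0..<M} \<and> card K = k. (vol (col_sub Phi K))\<^sup>2) = N choose k"
proof -
  let ?S = "{K. K \<subseteq> {0..<M} \<and> card K = k}"
  let ?h = "\<lambda>f g. (cmod (det (minor k Phi f g)))\<^sup>2"
  have abs_sign: "\<bar>real_of_int (sign p)\<bar> = 1" for p :: "nat \<Rightarrow> nat"
    by (simp add: sign_def)
  have pick_map: "minor k Phi f (pick_map k K) = minor k Phi f (pick K)" for f K
    by (intro eq_matI) (auto simp: minor_def pick_map_def)
  have "fact k * (\<Sum>K\<in>?S. (vol (col_sub Phi K))\<^sup>2) = (\<Sum>K\<in>?S. \<Sum>f\<in>index_maps k N. ?h f (pick_map k K))"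
    by (subst sum_distrib_left) (auto simp: vol_col_sub_sq[OF carrier] pick_map intro!: sum.cong)
  also have "\<dots> = (\<Sum>f\<in>index_maps k N. \<Sum>K\<in>?S. ?h f (pick_map k K))"
    by (rule sum.swap)
  also have "\<dots> = (\<Sum>f\<in>index_maps k N. (\<Sum>g\<in>index_maps k M. ?h f g) / fact k)"
    by (intro sum.cong refl, subst sum_index_maps_symmetric)
      (auto simp: det_minor_permute_cols det_minor_not_inj_cols norm_mult abs_sign)
  also have "\<dots> = (\<Sum>f\<in>index_maps k N. if inj_on f {0..<k} then 1 else 0)"
    by (intro sum.cong refl) (simp add: sum_sq_minors_rows)
  also have "\<dots> = fact k * (N choose k)" by (rule card_inj_index_maps)
  finally show ?thesis by simp
qed

lemma reconstruction:
  assumes U: "U \<subseteq> {0..<M}" and zero: "\<forall>i\<in>{0..<M} - U. col Phi i = 0\<^sub>v N"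
    and v: "v \<in> carrier_vec N"
  shows "v = finsum_vec TYPE(complex) N (\<lambda>i. cinner v (col Phi i) \<cdot>\<^sub>v col Phi i) U"
proof -
  let ?c = "\<lambda>i. cinner v (col Phi i)"
  have finU: "finite U" using U finite_subset by auto
  have closed: "(\<lambda>i. ?c i \<cdot>\<^sub>v col Phi i) \<in> U \<rightarrow> carrier_vec N" using carrier by auto
  have entry: "finsum_vec TYPE(complex) N (\<lambda>i. ?c i \<cdot>\<^sub>v col Phi i) U $ l = v $ l"
    if l: "l < N" for l
  proof -
    have "finsum_vec TYPE(complex) N (\<lambda>i. ?c i \<cdot>\<^sub>v col Phi i) U $ l = (\<Sum>i\<in>U. ?c i * Phi $$ (l,i))"
      using index_finsum_vec[OF finU l closed] carrier l U by (auto intro!: sum.cong)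
    also have "\<dots> = (\<Sum>i=0..<M. ?c i * Phi $$ (l,i))"
      using U zero carrier l by (intro sum.mono_neutral_left) (auto simp: vec_eq_iff)
    also have "\<dots> = (\<Sum>i=0..<M. \<Sum>l'<N. v $ l' * (Phi $$ (l,i) * cnj (Phi $$ (l',i))))"
      unfolding cinner_def using v carrier by (simp add: sum_distrib_left mult_ac)
    also have "\<dots> = (\<Sum>l'<N. v $ l' * (\<Sum>i=0..<M. Phi $$ (l,i) * cnj (Phi $$ (l',i))))"
      by (subst sum.swap) (simp add: sum_distrib_left)
    also have "\<dots> = v $ l" using l by (simp add: row_inner if_distrib[of "(*) _"] cong: if_cong)
    finally show ?thesis .
  qed
  have sum_carrier: "finsum_vec TYPE(complex) N (\<lambda>i. ?c i \<cdot>\<^sub>v col Phi i) U \<in> carrier_vec N"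
    by (rule finsum_vec_closed[OF closed])
  show ?thesis
  proof (rule eq_vecI)
    fix l assume "l < dim_vec (finsum_vec TYPE(complex) N (\<lambda>i. ?c i \<cdot>\<^sub>v col Phi i) U)"
    then show "v $ l = finsum_vec TYPE(complex) N (\<lambda>i. ?c i \<cdot>\<^sub>v col Phi i) U $ l"
      using sum_carrier entry by simp
  next
    show "dim_vec v = dim_vec (finsum_vec TYPE(complex) N (\<lambda>i. ?c i \<cdot>\<^sub>v col Phi i) U)"
      using v sum_carrier by simp
  qed
qed

lemma is_onb_unit_cols:
  assumes F: "F = \<real> \<or> F = UNIV" and colF: "\<forall>i<M. in_field_vec F N (col Phi i)"
    and U: "U \<subseteq> {0..<M}" "\<forall>x\<in>U. sq_norm_col x = 1"
    and zero: "\<forall>i\<in>{0..<M} - U. col Phi i = 0\<^sub>v N"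
  shows "is_onb F N Phi U"
  unfolding is_onb_def
proof (intro conjI ballI allI impI)
  fix i j assume "i \<in> U" "j \<in> U"
  then have ij: "i < M" "j < M" "sq_norm_col j = 1" using U by auto
  show "cinner (col Phi i) (col Phi j) = (if i = j then 1 else 0)"
  proof (cases "i = j")
    case True
    then show ?thesis using cinner_col[OF ij(1,2)] gram_diag[OF ij(2)] ij(3) by simp
  next
    case False
    then show ?thesis using cinner_col[OF ij(1,2)] gram_eq_0_if_unit_col[OF ij(2,1) _ ij(3)] by simp
  qed
next
  fix v assume v: "in_field_vec F N v"
  then have v_carrier: "v \<in> carrier_vec N" by (simp add: in_field_vec_def)
  have "cinner v (col Phi i) \<in> F" if "i \<in> U" for i
  proof (cases "F = UNIV")
    case False
    then have real: "F = \<real>" using F by blast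
    have "v $ l \<in> \<real>" "col Phi i $ l \<in> \<real>" if "l < N" for l
      using v colF \<open>i \<in> U\<close> U(1) that unfolding real in_field_vec_def by auto
    then show ?thesis unfolding real cinner_def using v_carrier
      by (intro sum_in_Reals Reals_mult) (auto simp: Reals_cnj_iff)
  qed simp
  moreover have "v = finsum_vec TYPE(complex) N (\<lambda>i. cinner v (col Phi i) \<cdot>\<^sub>v col Phi i) U"
    by (rule reconstruction[OF U(1) zero v_carrier])
  ultimately show "\<exists>c. (\<forall>i\<in>U. c i \<in> F) \<and> v = finsum_vec TYPE(complex) N (\<lambda>i. c i \<cdot>\<^sub>v col Phi i) U"
    by (intro exI[where x = "\<lambda>i. cinner v (col Phi i)"]) blast
qed

lemma unit_cols_card_eq:
  defines "U \<equiv> {x \<in> {0..<M}. sq_norm_col x = 1}"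
  assumes "N \<le> card U"
  shows "card U = N" and "\<forall>i\<in>{0..<M} - U. col Phi i = 0\<^sub>v N"
proof -
  have "(\<Sum>x=0..<M. sq_norm_col x) = (\<Sum>x\<in>{0..<M} - U. sq_norm_col x) + (\<Sum>x\<in>U. sq_norm_col x)"
    by (rule sum.subset_diff) (auto simp: U_def)
  also have "(\<Sum>x\<in>U. sq_norm_col x) = card U" by (simp add: U_def)
  finally have rest: "(\<Sum>x\<in>{0..<M} - U. sq_norm_col x) = real N - card U"
    using sum_sq_norm_col by simp
  moreover have "0 \<le> (\<Sum>x\<in>{0..<M} - U. sq_norm_col x)" by (simp add: sum_nonneg sq_norm_col_def)
  ultimately show "card U = N" using assms(2) by simp
  then have "(\<Sum>x\<in>{0..<M} - U. sq_norm_col x) = 0" using rest by simp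
  then show "\<forall>i\<in>{0..<M} - U. col Phi i = 0\<^sub>v N"
    by (subst (asm) sum_nonneg_eq_0_iff) (auto simp: sq_norm_col_def sum_nonneg col_eq_zero_iff)
qed

lemma vol_col_sub_orthonormal_support:
  assumes orth: "\<forall>i\<in>J. \<forall>j\<in>J. cinner (col Phi i) (col Phi j) = (if i = j then 1 else 0)"
    and zero: "\<forall>i\<in>{0..<M} - J. col Phi i = 0\<^sub>v N"
    and K: "K \<subseteq> {0..<M}" "card K = k"
  shows "vol (col_sub Phi K) = (if K \<subseteq> J then 1 else 0)"
proof -
  have gram_J: "gram $$ (x,y) = (if x = y \<and> x \<in> J then 1 else 0)"
    if x: "x < M" and y: "y < M" for x y
  proof (cases "x \<in> J \<and> y \<in> J")
    case True
    then show ?thesis using orth cinner_col[OF y x] by auto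
  next
    case False
    then show ?thesis using zero x y gram_eq_0_if_zero_col[OF x y] by auto
  qed
  let ?G = "mat_adjoint (col_sub Phi K) * col_sub Phi K"
  have G: "?G = mat k k (\<lambda>(a,b). if a = b \<and> pick K a \<in> J then 1 else 0)"
    unfolding mat_adjoint_col_sub_mult[OF carrier K] gram_def[symmetric] minor_def
    using gram_J pick_less[OF K] pick_eq_iff[OF K(2)] by (intro eq_matI) auto
  have bij: "bij_betw (pick K) {0..<k} K"
    using pick_bij_betw[OF finite_subset[OF K(1)] K(2)] by simp
  show ?thesis
  proof (cases "K \<subseteq> J")
    case True
    then have "?G = 1\<^sub>m k" unfolding G using bij_betw_apply[OF bij] by (intro eq_matI) auto
    then show ?thesis using True by (simp add: vol_def)
  next
    case False
    then obtain x where "x \<in> K" "x \<notin> J" by auto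
    then obtain a where a: "a < k" "pick K a \<notin> J"
      using bij_betw_imp_surj_on[OF bij] by (metis atLeastLessThan_iff imageE)
    have "?G = mat\<^sub>r k k (\<lambda>i. if i = a then 0\<^sub>v k else row ?G i)"
      using a unfolding G by (intro eq_matI) auto
    also have "det \<dots> = 0" by (rule det_row_0[OF a(1)]) (simp add: G)
    finally show ?thesis using False by (simp add: vol_def)
  qed
qed

text \<open>Forward direction: the \<open>k\<close>-sets of volume \<open>1\<close> consist of unit columns and there are
  \<open>N choose k\<close> of them, so at least \<open>N\<close> columns are unit vectors; as the squared column
  norms sum to \<open>N\<close>, exactly \<open>N\<close> are, and all others vanish.\<close>
lemma vol_col_sub_0_or_1_iff_onb:
  assumes F: "F = \<real> \<or> F = UNIV" and colF: "\<forall>i<M. in_field_vec F N (col Phi i)"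
    and k: "1 \<le> k" "k \<le> N"
  shows "(\<forall>K. K \<subseteq> {0..<M} \<and> card K = k \<longrightarrow> vol (col_sub Phi K) = 0 \<or> vol (col_sub Phi K) = 1)
    \<longleftrightarrow> (\<exists>J. J \<subseteq> {0..<M} \<and> card J = N \<and> is_onb F N Phi J \<and>
          (\<forall>i\<in>{0..<M} - J. col Phi i = 0\<^sub>v N))"
proof
  assume vol01: "\<forall>K. K \<subseteq> {0..<M} \<and> card K = k \<longrightarrow> vol (col_sub Phi K) = 0 \<or> vol (col_sub Phi K) = 1"
  let ?S = "{K. K \<subseteq> {0..<M} \<and> card K = k}"
  define U where "U = {x \<in> {0..<M}. sq_norm_col x = 1}"
  define T where "T = {K \<in> ?S. vol (col_sub Phi K) = 1}"
  have "finite ?S" by (rule finite_subset[of _ "Pow {0..<M}"]) auto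
  have "real (N choose k) = (\<Sum>K\<in>?S. (vol (col_sub Phi K))\<^sup>2)"
    by (rule sum_vol_col_sub_sq[symmetric])
  also have "\<dots> = (\<Sum>K\<in>?S. if vol (col_sub Phi K) = 1 then 1 else 0)"
    using vol01 by (intro sum.cong) auto
  also have "\<dots> = card T"
    using \<open>finite ?S\<close> by (simp add: T_def sum.inter_filter[symmetric])
  finally have "N choose k = card T" by linarith
  also have "card T \<le> card {K. K \<subseteq> U \<and> card K = k}"
    using sq_norm_col_eq_1_if_vol_col_sub_eq_1 by (intro card_mono) (auto simp: U_def T_def)
  also have "\<dots> = card U choose k" by (rule n_subsets) (simp add: U_def)
  finally have "N \<le> card U" using binomial_strict_mono_left[of "card U" N k] k by linarith
  then have "card U = N" "\<forall>i\<in>{0..<M} - U. col Phi i = 0\<^sub>v N"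
    unfolding U_def by (rule unit_cols_card_eq)+
  moreover have "is_onb F N Phi U"
    by (rule is_onb_unit_cols[OF F colF _ _ calculation(2)]) (auto simp: U_def)
  moreover have "U \<subseteq> {0..<M}" by (auto simp: U_def)
  ultimately show "\<exists>J. J \<subseteq> {0..<M} \<and> card J = N \<and> is_onb F N Phi J \<and>
      (\<forall>i\<in>{0..<M} - J. col Phi i = 0\<^sub>v N)"
    by blast
next
  assume "\<exists>J. J \<subseteq> {0..<M} \<and> card J = N \<and> is_onb F N Phi J \<and>
      (\<forall>i\<in>{0..<M} - J. col Phi i = 0\<^sub>v N)"
  then show "\<forall>K. K \<subseteq> {0..<M} \<and> card K = k \<longrightarrow> vol (col_sub Phi K) = 0 \<or> vol (col_sub Phi K) = 1"
    using vol_col_sub_orthonormal_support unfolding is_onb_def by (metis (no_types, lifting))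
qed

end

theorem proposition8:
  fixes F :: "complex set" and N M k :: nat and Phi :: "complex mat"
  assumes "F = \<real> \<or> F = UNIV"
    and "parseval_frame F N M Phi"
    and "1 \<le> k" and "k \<le> N"
  shows "real (N choose k) \<le> total_vol M k Phi
     \<and> total_vol M k Phi \<le> sqrt (real (M choose k) * real (N choose k))
     \<and> (total_vol M k Phi = sqrt (real (M choose k) * real (N choose k)) \<longleftrightarrow>
          (\<forall>K. K \<subseteq> {0..<M} \<and> card K = k \<longrightarrow>
             vol (col_sub Phi K) = sqrt (real (N choose k) / real (M choose k))))
     \<and> (total_vol M k Phi = real (N choose k) \<longleftrightarrow>
          (\<exists>J. J \<subseteq> {0..<M} \<and> card J = N \<and> is_onb F N Phi J \<and>
               (\<forall>i\<in>{0..<M} - J. col Phi i = 0\<^sub>v N)))"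
proof -
  interpret parseval_matrix Phi N M
    using assms(2) by unfold_locales (auto simp: parseval_frame_def)
  define S where "S = {K. K \<subseteq> {0..<M} \<and> card K = k}"
  let ?v = "\<lambda>K. vol (col_sub Phi K)"
  have S: "finite S" "card S = M choose k"
    using n_subsets[of "{0..<M}" k] finite_subset[of S "Pow {0..<M}"] by (auto simp: S_def)
  have bounds: "\<forall>K\<in>S. 0 \<le> ?v K \<and> ?v K \<le> 1"
    using vol_col_sub_le_1 unfolding S_def vol_def by auto
  have sq: "(\<Sum>K\<in>S. (?v K)\<^sup>2) = N choose k" unfolding S_def by (rule sum_vol_col_sub_sq)
  then have "S \<noteq> {}" using assms(4) by auto
  have total: "total_vol M k Phi = sum ?v S" by (simp add: total_vol_def S_def)
  have "(\<Sum>K\<in>S. (?v K)\<^sup>2) \<le> sum ?v S"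
    using bounds by (intro sum_mono) (simp add: power2_eq_square mult_left_le)
  moreover have "sum ?v S = N choose k \<longleftrightarrow> (\<forall>K\<in>S. ?v K = 0 \<or> ?v K = 1)"
    using sum_eq_sum_power2_iff[OF S(1) bounds] sq by simp
  ultimately show ?thesis
    using sum_le_sqrt_card_mult_sum_power2[OF S(1), of ?v]
      sum_eq_sqrt_card_mult_sum_power2_iff[OF S(1) \<open>S \<noteq> {}\<close>, of ?v]
      vol_col_sub_0_or_1_iff_onb[OF assms(1) _ assms(3,4)] assms(2)
    unfolding total sq S(2) by (auto simp: S_def parseval_frame_def mult.commute)
qed

end
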